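(* Let $n\ge 1$, let $c\in\mathbb{R}^n$ with $c_1\ge c_2\ge\cdots\ge c_n\ge 0$, and let $u\in\mathbb{R}^n$ with $u_i>0$ for all $i$. Let $f(x)=\frac12\left(\sum_{i=1}^n x_i\right)^2-\sum_{i=1}^n c_ix_i$. For $k=0,\dots,n$ let $U_k=\sum_{i=1}^k u_i$ ($U_0=0$) and let $x^{(k)}$ be the vector with $x^{(k)}_i=u_i$ for $i\le k$ and $x^{(k)}_i=0$ for $i>k$. For $k=1,\dots,n$ let $G_k=U_{k-1}+\frac12 u_k-c_k$, and suppose $\bar n$ is the smallest index in $\{1,\dots,n\}$ with $G_{\bar n}\ge 0$. Let $e_i$ denote the $i$-th standard unit vector of $\mathbb{R}^n$. (i) If $\bar n>1$, let $\delta_1=\min\{c_{\bar n-1}-U_{\bar n-2},\,u_{\bar n-1}\}$, $\delta_2=\max\{c_{\bar n}-U_{\bar n-1},\,0\}$, $\bar x=x^{(\bar n-2)}+\delta_1e_{\bar n-1}$ and $\tilde x=x^{(\bar n-1)}+\delta_2e_{\bar n}$. Then $\min\{f(\bar x),f(\tilde x)\}$ is the optimal value of the problem of minimizing $f(x)$ subject to $x^{(\bar n-2)}\le x\le x^{(\bar n)}$ (componentwise). (ii) If $\bar n=1$, let $\delta=\min\{c_1,u_1\}$ and $\tilde x=\delta e_1$. Then $f(\tilde x)$ is the optimal value of the problem of minimizing $f(x)$ subject to $x^{(0)}\le x\le x^{(1)}$.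
   Context: Inequalities between vectors are componentwise. *)

theory Defs
  imports Complex_Main
begin

text \<open>Vectors of R^n are represented as functions nat => real, using the
components with indices 1..n.\<close>

definition fobj :: "nat \<Rightarrow> (nat \<Rightarrow> real) \<Rightarrow> (nat \<Rightarrow> real) \<Rightarrow> real" where
  "fobj n c x = (1/2) * (\<Sum>i=1..n. x i)^2 - (\<Sum>i=1..n. c i * x i)"

definition Usum :: "(nat \<Rightarrow> real) \<Rightarrow> nat \<Rightarrow> real" where
  "Usum u k = (\<Sum>i=1..k. u i)"

definition xk :: "(nat \<Rightarrow> real) \<Rightarrow> nat \<Rightarrow> nat \<Rightarrow> real" where
  "xk u k = (\<lambda>i. if 1 \<le> i \<and> i \<le> k then u i else 0)"

definition Gk :: "(nat \<Rightarrow> real) \<Rightarrow> (nat \<Rightarrow> real) \<Rightarrow> nat \<Rightarrow> real" where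
  "Gk u c k = Usum u (k - 1) + (1/2) * u k - c k"

definition unitv :: "nat \<Rightarrow> nat \<Rightarrow> real" where
  "unitv j = (\<lambda>i. if i = j then 1 else 0)"

definition box :: "nat \<Rightarrow> (nat \<Rightarrow> real) \<Rightarrow> (nat \<Rightarrow> real) \<Rightarrow> (nat \<Rightarrow> real) set" where
  "box n lo hi = {x. \<forall>i\<in>{1..n}. lo i \<le> x i \<and> x i \<le> hi i}"

end

theory Submission
  imports Defs
begin

text \<open>On the box between \<open>x(k)\<close> and \<open>x(k + 2)\<close> only \<open>a = x (k + 1)\<close> and \<open>b = x (k + 2)\<close>
  are free, and up to a constant \<open>f\<close> is \<open>(S + a + b)\<^sup>2/2 - p a - q b\<close> with \<open>S = U k\<close> and
  \<open>p = c (k + 1) \<ge> q = c (k + 2)\<close>. Because \<open>p \<ge> q\<close>, shifting mass from \<open>b\<close> to \<open>a\<close> never increases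
  \<open>f\<close>, so some minimiser has \<open>b = 0\<close> or \<open>a = u (k + 1)\<close>. Either way what remains is a convex
  quadratic in one variable, minimised at the projection of its vertex onto the interval. For
  \<open>k = nbar - 2\<close> the conditions \<open>G (nbar - 1) < 0 \<le> G nbar\<close> make one side of each projection
  inactive, which gives the one-sided formulas for \<open>\<delta>1\<close> and \<open>\<delta>2\<close>.\<close>

lemma mem_box_xk:
  assumes "k \<le> m" "m \<le> n"
  shows "x \<in> box n (xk u k) (xk u m) \<longleftrightarrow>
    (\<forall>i\<in>{1..k}. x i = u i) \<and> (\<forall>i\<in>{k<..m}. 0 \<le> x i \<and> x i \<le> u i) \<and> (\<forall>i\<in>{m<..n}. x i = 0)"
proof -
  let ?P = "\<lambda>i. xk u k i \<le> x i \<and> x i \<le> xk u m i"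
  have "{1..n} = {1..k} \<union> {k<..m} \<union> {m<..n}"
    using assms by auto
  then have "x \<in> box n (xk u k) (xk u m) \<longleftrightarrow>
      (\<forall>i\<in>{1..k}. ?P i) \<and> (\<forall>i\<in>{k<..m}. ?P i) \<and> (\<forall>i\<in>{m<..n}. ?P i)"
    unfolding box_def by auto
  moreover have "(\<forall>i\<in>{1..k}. ?P i) \<longleftrightarrow> (\<forall>i\<in>{1..k}. x i = u i)"
    using assms by (auto simp: xk_def)
  moreover have "(\<forall>i\<in>{k<..m}. ?P i) \<longleftrightarrow> (\<forall>i\<in>{k<..m}. 0 \<le> x i \<and> x i \<le> u i)"
    by (auto simp: xk_def)
  moreover have "(\<forall>i\<in>{m<..n}. ?P i) \<longleftrightarrow> (\<forall>i\<in>{m<..n}. x i = 0)"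
    using assms by (auto simp: xk_def)
  ultimately show ?thesis
    by simp
qed

lemma fobj_on_box:
  assumes "x \<in> box n (xk u k) (xk u m)" "k \<le> m" "m \<le> n"
  shows "fobj n c x = (1/2) * (Usum u k + (\<Sum>i=k+1..m. x i))^2
    - (\<Sum>i=1..k. c i * u i) - (\<Sum>i=k+1..m. c i * x i)"
proof -
  obtain j where m: "m = k + j" using \<open>k \<le> m\<close> le_Suc_ex by blast
  have lower: "\<And>i. i \<in> {1..k} \<Longrightarrow> x i = u i" and upper: "\<And>i. i \<in> {m<..n} \<Longrightarrow> x i = 0"
    using assms mem_box_xk by blast+
  have split: "(\<Sum>i=1..n. g i) = (\<Sum>i=1..k. g i) + (\<Sum>i=k+1..m. g i)"
    if "\<And>i. i \<in> {m<..n} \<Longrightarrow> g i = 0" for g :: "nat \<Rightarrow> real"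
  proof -
    have "(\<Sum>i=1..n. g i) = (\<Sum>i=1..m. g i)"
      by (rule sum.mono_neutral_right) (use that \<open>m \<le> n\<close> in auto)
    also have "\<dots> = (\<Sum>i=1..k. g i) + (\<Sum>i=k+1..m. g i)"
      unfolding m by (rule sum.ub_add_nat) simp
    finally show ?thesis .
  qed
  have "(\<Sum>i=1..k. x i) = Usum u k" "(\<Sum>i=1..k. c i * x i) = (\<Sum>i=1..k. c i * u i)"
    using lower unfolding Usum_def by (auto intro: sum.cong)
  moreover have "(\<Sum>i=1..n. x i) = (\<Sum>i=1..k. x i) + (\<Sum>i=k+1..m. x i)"
    "(\<Sum>i=1..n. c i * x i) = (\<Sum>i=1..k. c i * x i) + (\<Sum>i=k+1..m. c i * x i)"
    by (rule split, simp add: upper)+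
  ultimately show ?thesis
    unfolding fobj_def by simp
qed

lemma clamp_minimises_quadratic:
  fixes S p t U :: real
  assumes "0 \<le> t" "t \<le> U"
  defines "d \<equiv> max 0 (min (p - S) U)"
  shows "(1/2) * (S + d)^2 - p * d \<le> (1/2) * (S + t)^2 - p * t"
proof -
  have square: "(1/2) * (S + s)^2 - p * s = (1/2) * (s - (p - S))^2 + (S^2 - (p - S)^2) / 2"
    for s :: real
    by (simp add: power2_eq_square field_simps)
  have "\<bar>d - (p - S)\<bar> \<le> \<bar>t - (p - S)\<bar>"
    using assms by (auto simp: d_def)
  then have "(d - (p - S))^2 \<le> (t - (p - S))^2"
    by (simp add: abs_le_square_iff)
  then show ?thesis
    unfolding square by simp
qed

lemma two_variable_quadratic_min:
  fixes S p q a b U1 U2 :: real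
  assumes "q \<le> p" "0 \<le> a" "a \<le> U1" "0 \<le> b" "b \<le> U2"
  defines "d1 \<equiv> max 0 (min (p - S) U1)" and "d2 \<equiv> max 0 (min (q - (S + U1)) U2)"
  shows "min ((1/2) * (S + d1)^2 - p * d1) ((1/2) * (S + U1 + d2)^2 - p * U1 - q * d2)
    \<le> (1/2) * (S + a + b)^2 - p * a - q * b"
proof (cases "a + b \<le> U1")
  case True
  have "(1/2) * (S + d1)^2 - p * d1 \<le> (1/2) * (S + (a + b))^2 - p * (a + b)"
    unfolding d1_def by (rule clamp_minimises_quadratic) (use assms True in auto)
  moreover have "q * b \<le> p * b"
    using assms by (intro mult_right_mono) auto
  moreover have "(1/2) * (S + (a + b))^2 - p * (a + b) = (1/2) * (S + a + b)^2 - p * a - p * b"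
    by (simp add: algebra_simps)
  ultimately show ?thesis
    using min.cobounded1 by linarith
next
  case False
  have "(1/2) * ((S + U1) + d2)^2 - q * d2
      \<le> (1/2) * ((S + U1) + (a + b - U1))^2 - q * (a + b - U1)"
    unfolding d2_def by (rule clamp_minimises_quadratic) (use assms False in auto)
  moreover have "q * U1 - q * a \<le> p * U1 - p * a"
    using mult_right_mono[of q p "U1 - a"] assms by (simp add: algebra_simps)
  moreover have "(1/2) * ((S + U1) + (a + b - U1))^2 - q * (a + b - U1)
      = (1/2) * (S + a + b)^2 - q * a - q * b + q * U1"
    by (simp add: algebra_simps)
  ultimately show ?thesis
    using min.cobounded2 by linarith
qed

lemma INF_fobj_box_one_free:
  assumes "k + 1 \<le> n" "0 \<le> u (k + 1)"
    and "\<delta> = max 0 (min (c (k + 1) - Usum u k) (u (k + 1)))"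
  shows "(INF x \<in> box n (xk u k) (xk u (k + 1)). fobj n c x)
    = fobj n c (\<lambda>i. xk u k i + \<delta> * unitv (k + 1) i)"
proof (rule cInf_eq_minimum)
  let ?B = "box n (xk u k) (xk u (k + 1))"
  let ?x = "\<lambda>i. xk u k i + \<delta> * unitv (k + 1) i"
  have "0 \<le> \<delta>" "\<delta> \<le> u (k + 1)"
    using assms(2,3) by auto
  then have x_in: "?x \<in> ?B"
    using assms(1) by (subst mem_box_xk) (auto simp: xk_def unitv_def le_Suc_eq)
  then show "fobj n c ?x \<in> fobj n c ` ?B" by blast
  fix y assume "y \<in> fobj n c ` ?B"
  then obtain x where x: "x \<in> ?B" and y: "y = fobj n c x" by blast
  have "0 \<le> x (k + 1)" "x (k + 1) \<le> u (k + 1)"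
    using x assms(1) by (auto simp: mem_box_xk)
  then have "(1/2) * (Usum u k + \<delta>)^2 - c (k + 1) * \<delta>
      \<le> (1/2) * (Usum u k + x (k + 1))^2 - c (k + 1) * x (k + 1)"
    unfolding assms(3) by (rule clamp_minimises_quadratic)
  then show "fobj n c ?x \<le> y"
    using fobj_on_box[OF x_in] fobj_on_box[OF x] assms(1) y by (simp add: xk_def unitv_def)
qed

lemma INF_fobj_box_two_free:
  assumes "k + 2 \<le> n" "0 \<le> u (k + 1)" "0 \<le> u (k + 2)" "c (k + 2) \<le> c (k + 1)"
    and "\<delta>1 = max 0 (min (c (k + 1) - Usum u k) (u (k + 1)))"
    and "\<delta>2 = max 0 (min (c (k + 2) - Usum u (k + 1)) (u (k + 2)))"
  shows "(INF x \<in> box n (xk u k) (xk u (k + 2)). fobj n c x)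
    = min (fobj n c (\<lambda>i. xk u k i + \<delta>1 * unitv (k + 1) i))
          (fobj n c (\<lambda>i. xk u (k + 1) i + \<delta>2 * unitv (k + 2) i))"
proof (rule cInf_eq_minimum)
  let ?B = "box n (xk u k) (xk u (k + 2))"
  let ?x1 = "\<lambda>i. xk u k i + \<delta>1 * unitv (k + 1) i"
  let ?x2 = "\<lambda>i. xk u (k + 1) i + \<delta>2 * unitv (k + 2) i"
  have "0 \<le> \<delta>1" "\<delta>1 \<le> u (k + 1)" "0 \<le> \<delta>2" "\<delta>2 \<le> u (k + 2)"
    using assms(2,3,5,6) by auto
  then have x1_in: "?x1 \<in> ?B" and x2_in: "?x2 \<in> ?B"
    using assms(1,2) by (subst mem_box_xk; auto simp: xk_def unitv_def le_Suc_eq)+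
  then show "min (fobj n c ?x1) (fobj n c ?x2) \<in> fobj n c ` ?B"
    by (simp add: min_def)
  fix y assume "y \<in> fobj n c ` ?B"
  then obtain x where x: "x \<in> ?B" and y: "y = fobj n c x" by blast
  have bounds: "0 \<le> x (k + 1)" "x (k + 1) \<le> u (k + 1)" "0 \<le> x (k + 2)" "x (k + 2) \<le> u (k + 2)"
    using x assms(1) by (auto simp: mem_box_xk)
  have Usum_Suc: "Usum u (k + 1) = Usum u k + u (k + 1)"
    unfolding Usum_def by simp
  have "min ((1/2) * (Usum u k + \<delta>1)^2 - c (k + 1) * \<delta>1)
        ((1/2) * (Usum u k + u (k + 1) + \<delta>2)^2 - c (k + 1) * u (k + 1) - c (k + 2) * \<delta>2)
      \<le> (1/2) * (Usum u k + x (k + 1) + x (k + 2))^2 - c (k + 1) * x (k + 1) - c (k + 2) * x (k + 2)"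
    unfolding assms(5,6) Usum_Suc by (rule two_variable_quadratic_min[OF assms(4) bounds])
  moreover have "(\<Sum>i=k+1..k+2. g i) = g (k + 1) + g (k + 2)" for g :: "nat \<Rightarrow> real"
    by (simp add: numeral_2_eq_2)
  ultimately show "min (fobj n c ?x1) (fobj n c ?x2) \<le> y"
    using fobj_on_box[OF x1_in] fobj_on_box[OF x2_in] fobj_on_box[OF x] assms(1) y
    by (auto simp: xk_def unitv_def add.assoc min_le_iff_disj)
qed

theorem theorem2:
  fixes n nbar :: nat and c u :: "nat \<Rightarrow> real"
  assumes n: "n \<ge> 1"
    and c_mono: "\<And>i j. 1 \<le> i \<Longrightarrow> i \<le> j \<Longrightarrow> j \<le> n \<Longrightarrow> c j \<le> c i"
    and c_nonneg: "c n \<ge> 0"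
    and u_pos: "\<And>i. 1 \<le> i \<Longrightarrow> i \<le> n \<Longrightarrow> u i > 0"
    and nbar_range: "1 \<le> nbar" "nbar \<le> n"
    and G_nbar: "Gk u c nbar \<ge> 0"
    and nbar_least: "\<And>k. 1 \<le> k \<Longrightarrow> k < nbar \<Longrightarrow> Gk u c k < 0"
  shows "(nbar > 1 \<longrightarrow>
           (let \<delta>1 = min (c (nbar - 1) - Usum u (nbar - 2)) (u (nbar - 1));
                \<delta>2 = max (c nbar - Usum u (nbar - 1)) 0;
                xbar = (\<lambda>i. xk u (nbar - 2) i + \<delta>1 * unitv (nbar - 1) i);
                xtil = (\<lambda>i. xk u (nbar - 1) i + \<delta>2 * unitv nbar i)
            in min (fobj n c xbar) (fobj n c xtil)
               = (INF x \<in> box n (xk u (nbar - 2)) (xk u nbar). fobj n c x)))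
       \<and> (nbar = 1 \<longrightarrow>
           (let \<delta> = min (c 1) (u 1);
                xtil = (\<lambda>i. \<delta> * unitv 1 i)
            in fobj n c xtil = (INF x \<in> box n (xk u 0) (xk u 1). fobj n c x)))"
proof (intro conjI impI, goal_cases)
  case 1
  define k where "k = nbar - 2"
  have k: "nbar = k + 2" and k_sub: "nbar - 2 = k" "nbar - 1 = k + 1"
    using 1 unfolding k_def by simp_all
  have u: "0 < u (k + 1)" "0 < u (k + 2)"
    using u_pos nbar_range unfolding k by simp_all
  have c: "c (k + 2) \<le> c (k + 1)"
    using c_mono[of "k + 1" "k + 2"] nbar_range unfolding k by simp
  have "u (k + 1) / 2 < c (k + 1) - Usum u k"
    using nbar_least[of "k + 1"] unfolding Gk_def k by simp
  then have \<delta>1: "min (c (k + 1) - Usum u k) (u (k + 1))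
      = max 0 (min (c (k + 1) - Usum u k) (u (k + 1)))"
    using u by linarith
  have "c (k + 2) - Usum u (k + 1) \<le> u (k + 2) / 2"
    using G_nbar unfolding Gk_def k by simp
  then have \<delta>2: "max (c (k + 2) - Usum u (k + 1)) 0
      = max 0 (min (c (k + 2) - Usum u (k + 1)) (u (k + 2)))"
    using u by linarith
  show ?case
    unfolding Let_def k_sub unfolding k
    by (rule INF_fobj_box_two_free[symmetric, OF _ less_imp_le[OF u(1)] less_imp_le[OF u(2)] c
          \<delta>1 \<delta>2]) (use nbar_range k in simp)
next
  case 2
  have "0 \<le> c 1" "0 < u 1"
    using c_mono[of 1 n] c_nonneg u_pos n by simp_all
  then have "min (c 1) (u 1) = max 0 (min (c (0 + 1) - Usum u 0) (u (0 + 1)))"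
    unfolding Usum_def by simp
  then have "(INF x \<in> box n (xk u 0) (xk u (0 + 1)). fobj n c x)
      = fobj n c (\<lambda>i. xk u 0 i + min (c 1) (u 1) * unitv (0 + 1) i)"
    using n \<open>0 < u 1\<close> by (intro INF_fobj_box_one_free) simp_all
  moreover have "xk u 0 = (\<lambda>i. 0)"
    unfolding xk_def by auto
  ultimately show ?case
    by (simp add: Let_def)
qed

end
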